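(* Let $F$ be a smooth real-valued function defined on an open neighbourhood of $\dot P_m$ in the real vector space of $m\times m$ Hermitian matrices, and let $\mathcal M(F)$ be the $m\times m$ matrix of its complex partial derivatives defined below. Then the gradient vector of $F|_{\dot P_m}$ at $\rho\in\dot P_m$ with respect to the quantum SLD Fisher metric is $$(\mathrm{grad}\,F)(\rho)=\tfrac12\big(\rho\,\mathcal M(F)+\mathcal M(F)\,\rho\big)-\operatorname{tr}\big(\rho\,\mathcal M(F)\big)\,\rho .$$ Consequently the gradient system $\frac{d\rho}{dt}=-(\mathrm{grad}\,F)(\rho)$ on $(\dot P_m,\langle\!\langle\cdot,\cdot\rangle\!\rangle^{QF})$ is governed by $$\frac{d\rho}{dt}=-\tfrac12\big(\rho\,\mathcal M(F)+\mathcal M(F)\,\rho\big)+\operatorname{tr}\big(\rho\,\mathcal M(F)\big)\,\rho .$$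
   Context: $\dot P_m$ denotes the set of $m\times m$ complex Hermitian positive definite matrices $\rho$ with $\operatorname{tr}\rho=1$ (regular density matrices). Its tangent space at $\rho$ is $T_\rho\dot P_m=\{\Xi\in M(m,m):\Xi^\dagger=\Xi,\ \operatorname{tr}\Xi=0\}$. For $\Xi\in T_\rho\dot P_m$ the symmetric logarithmic derivative $\mathcal L_\rho(\Xi)$ is the matrix with $\tfrac12(\rho\mathcal L_\rho(\Xi)+\mathcal L_\rho(\Xi)\rho)=\Xi$, and the quantum SLD Fisher metric is $\langle\!\langle\Xi,\Xi'\rangle\!\rangle^{QF}_\rho=\tfrac12\operatorname{tr}[\rho(\mathcal L_\rho(\Xi)\mathcal L_\rho(\Xi')+\mathcal L_\rho(\Xi')\mathcal L_\rho(\Xi))]$. The gradient $(\mathrm{grad}\,F)(\rho)\in T_\rho\dot P_m$ is defined by $\langle\!\langle(\mathrm{grad}\,F)(\rho),\Xi'\rangle\!\rangle^{QF}_\rho=\frac{d}{dt}\big|_{t=0}F(\gamma(t))$ for all $\Xi'\in T_\rho\dot P_m$, where $\gamma$ is any curve in $\dot P_m$ with $\gamma(0)=\rho$, $\gamma'(0)=\Xi'$. Write the entries of a Hermitian $\rho$ as $\rho_{jk}=\overline{\rho_{kj}}=x_{jk}+iy_{jk}$ ($j<k$, $x_{jk},y_{jk}$ real) and $\rho_{\ell\ell}=z_\ell$ real, and set $\partial/\partial\rho_{ab}=\tfrac12(\partial/\partial x_{ab}-i\,\partial/\partial y_{ab})$, $\partial/\partial\overline\rho_{ab}=\tfrac12(\partial/\partial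 x_{ab}+i\,\partial/\partial y_{ab})$ for $a<b$. Then $\mathcal M(F)$ is the $m\times m$ matrix with $(\mathcal M(F))_{jk}=\partial F/\partial\overline\rho_{jk}$ for $j<k$, $(\mathcal M(F))_{jk}=\partial F/\partial\rho_{kj}$ for $k<j$, and $(\mathcal M(F))_{jj}=\partial F/\partial z_j$. *)

theory Defs
  imports "HOL-Analysis.Analysis"
begin

type_synonym 'n cmat = "complex ^ 'n ^ 'n"

definition mtrace :: "'n::finite cmat \<Rightarrow> complex" where
  "mtrace A = (\<Sum>i\<in>UNIV. A $ i $ i)"

definition cscale :: "complex \<Rightarrow> 'n::finite cmat \<Rightarrow> 'n cmat" (infixr "*\<^sub>M" 75) where
  "c *\<^sub>M A = (\<chi> i j. c * A $ i $ j)"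

definition adjoint_mat :: "'n::finite cmat \<Rightarrow> 'n cmat" where
  "adjoint_mat A = (\<chi> i j. cnj (A $ j $ i))"

definition hermitian :: "'n::finite cmat \<Rightarrow> bool" where
  "hermitian A \<longleftrightarrow> adjoint_mat A = A"

definition Herm :: "'n::finite cmat set" where
  "Herm = {A. hermitian A}"

definition pos_def :: "'n::finite cmat \<Rightarrow> bool" where
  "pos_def A \<longleftrightarrow> hermitian A \<and>
     (\<forall>x::complex^'n. x \<noteq> 0 \<longrightarrow> 0 < Re (\<Sum>i\<in>UNIV. cnj (x $ i) * (A *v x) $ i))"

definition Pdot :: "'n::finite cmat set" where
  "Pdot = {\<rho>. pos_def \<rho> \<and> mtrace \<rho> = 1}"

definition tangent :: "'n::finite cmat set" where
  "tangent = {X. hermitian X \<and> mtrace X = 0}"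

definition SLD :: "'n::finite cmat \<Rightarrow> 'n cmat \<Rightarrow> 'n cmat" where
  "SLD \<rho> X = (THE L. (1/2) *\<^sub>M (\<rho> ** L + L ** \<rho>) = X)"

text \<open>Quantum SLD Fisher metric (the trace is real for Hermitian arguments).\<close>
definition QF :: "'n::finite cmat \<Rightarrow> 'n cmat \<Rightarrow> 'n cmat \<Rightarrow> real" where
  "QF \<rho> X Y = Re ((1/2) * mtrace (\<rho> ** (SLD \<rho> X ** SLD \<rho> Y + SLD \<rho> Y ** SLD \<rho> X)))"

definition is_grad :: "('n::finite cmat \<Rightarrow> real) \<Rightarrow> 'n cmat \<Rightarrow> 'n cmat \<Rightarrow> bool" where
  "is_grad F \<rho> G \<longleftrightarrow> G \<in> tangent \<and>
     (\<forall>X \<in> tangent. \<forall>\<gamma> :: real \<Rightarrow> 'n cmat.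
        (\<forall>\<^sub>F t in nhds 0. \<gamma> t \<in> Pdot) \<and> \<gamma> 0 = \<rho> \<and> (\<gamma> has_vector_derivative X) (at 0)
        \<longrightarrow> ((\<lambda>t. F (\<gamma> t)) has_real_derivative QF \<rho> G X) (at 0))"

definition mat_unit :: "'n::finite \<Rightarrow> 'n \<Rightarrow> 'n cmat" where
  "mat_unit a b = (\<chi> i j. if i = a \<and> j = b then 1 else 0)"

definition pderiv_dir :: "('n::finite cmat \<Rightarrow> real) \<Rightarrow> 'n cmat \<Rightarrow> 'n cmat \<Rightarrow> real" where
  "pderiv_dir F \<rho> E = deriv (\<lambda>t. F (\<rho> + t *\<^sub>R E)) 0"

text \<open>Coordinate directions: for \<open>a < b\<close>, \<open>x_ab\<close> moves \<open>\<rho>_ab\<close> and \<open>\<rho>_ba\<close> by 1;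
  \<open>y_ab\<close> moves \<open>\<rho>_ab\<close> by \<open>i\<close> and \<open>\<rho>_ba\<close> by \<open>-i\<close>; \<open>z_l\<close> moves \<open>\<rho>_ll\<close> by 1.\<close>
definition dx :: "('n::finite cmat \<Rightarrow> real) \<Rightarrow> 'n cmat \<Rightarrow> 'n \<Rightarrow> 'n \<Rightarrow> real" where
  "dx F \<rho> a b = pderiv_dir F \<rho> (mat_unit a b + mat_unit b a)"

definition dy :: "('n::finite cmat \<Rightarrow> real) \<Rightarrow> 'n cmat \<Rightarrow> 'n \<Rightarrow> 'n \<Rightarrow> real" where
  "dy F \<rho> a b = pderiv_dir F \<rho> (\<i> *\<^sub>M mat_unit a b - \<i> *\<^sub>M mat_unit b a)"

definition dz :: "('n::finite cmat \<Rightarrow> real) \<Rightarrow> 'n cmat \<Rightarrow> 'n \<Rightarrow> real" where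
  "dz F \<rho> l = pderiv_dir F \<rho> (mat_unit l l)"

text \<open>The matrix \<open>\<M>(F)\<close>: \<open>\<partial>/\<partial>\<rho>\<^sub>a\<^sub>b = (\<partial>x - i\<partial>y)/2\<close>, \<open>\<partial>/\<partial>conj \<rho>\<^sub>a\<^sub>b = (\<partial>x + i\<partial>y)/2\<close>.\<close>
definition MF :: "('n::{finite,linorder} cmat \<Rightarrow> real) \<Rightarrow> 'n cmat \<Rightarrow> 'n cmat" where
  "MF F \<rho> = (\<chi> j k.
     if j < k then (complex_of_real (dx F \<rho> j k) + \<i> * complex_of_real (dy F \<rho> j k)) / 2
     else if k < j then (complex_of_real (dx F \<rho> k j) - \<i> * complex_of_real (dy F \<rho> k j)) / 2
     else complex_of_real (dz F \<rho> j))"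

end

theory Submission
  imports Defs
begin

(* Write  lyap rho L = (rho L + L rho)/2, so that SLD rho X is the unique preimage of X
   under lyap rho (unique because lyap rho L = 0 forces tr(L* rho L) = 0, hence L = 0, for
   positive definite rho).  Then  QF rho G X = Re tr(SLD rho G * X).
   The derivative of F at rho is, on Hermitian directions, X |-> Re tr(M X) with M = MF F rho:
   both sides are real-linear and agree on the coordinate directions x_ab, y_ab, z_l, which
   span the Hermitian matrices.  For tangent X (trace 0) this equals Re tr((M - tr(rho M) I) X),
   and lyap rho (M - tr(rho M) I) is exactly the claimed gradient G, which is Hermitian with
   trace 0.  Hence QF rho G X = dF(X) on the tangent space; since straight lines
   rho + tX stay in Pdot for small t and the chain rule applies along any curve in Pdot, this
   is precisely the defining property of is_grad.  Uniqueness follows from the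
   nondegeneracy of QF on the tangent space, again via tr(N rho N) = 0 ==> N = 0. *)

lemma cscale_nth [simp]: "(c *\<^sub>M A) $ i $ j = c * A $ i $ j"
  by (simp add: cscale_def)

lemma adjoint_nth [simp]: "adjoint_mat A $ i $ j = cnj (A $ j $ i)"
  by (simp add: adjoint_mat_def)

lemma mat_mult_nth: "(A ** B) $ i $ j = (\<Sum>k\<in>UNIV. A $ i $ k * B $ k $ j)"
  by (simp add: matrix_matrix_mult_def)

lemma mat_unit_nth: "(mat_unit a b :: 'n::finite cmat) $ i $ j = (if i = a \<and> j = b then 1 else 0)"
  by (simp add: mat_unit_def)

lemma mtrace_add [simp]: "mtrace (A + B) = mtrace A + mtrace B"
  by (simp add: mtrace_def sum.distrib)

lemma mtrace_diff [simp]: "mtrace (A - B) = mtrace A - mtrace B"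
  by (simp add: mtrace_def sum_subtractf)

lemma mtrace_cscale [simp]: "mtrace (c *\<^sub>M A) = c * mtrace A"
  by (simp add: mtrace_def sum_distrib_left)

lemma mtrace_comm: "mtrace (A ** B) = mtrace (B ** A)"
  unfolding mtrace_def mat_mult_nth
  by (subst sum.swap) (simp add: mult.commute)

lemma mtrace_adjoint: "mtrace (adjoint_mat A) = cnj (mtrace A)"
  by (simp add: mtrace_def)

lemma mtrace_mult_mat_unit: "mtrace (A ** mat_unit a b) = A $ b $ a"
proof -
  have "(A ** mat_unit a b) $ i $ i = (if i = b then A $ b $ a else 0)" for i
    by (auto simp: mat_mult_nth mat_unit_nth if_distrib cong: if_cong)
  then show ?thesis
    by (simp add: mtrace_def)
qed

lemma cscale_mult_left [simp]: "(c *\<^sub>M A) ** B = c *\<^sub>M (A ** B)"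
  by (simp add: vec_eq_iff mat_mult_nth sum_distrib_left mult.assoc)

lemma cscale_mult_right [simp]: "A ** (c *\<^sub>M B) = c *\<^sub>M (A ** B)"
  by (simp add: vec_eq_iff mat_mult_nth sum_distrib_left mult.left_commute)

lemma cscale_add: "c *\<^sub>M (A + B) = c *\<^sub>M A + c *\<^sub>M B"
  by (simp add: vec_eq_iff algebra_simps)

lemma cscale_diff: "c *\<^sub>M (A - B) = c *\<^sub>M A - c *\<^sub>M B"
  by (simp add: vec_eq_iff algebra_simps)

lemma cscale_cscale [simp]: "c *\<^sub>M (d *\<^sub>M A) = (c * d) *\<^sub>M A"
  by (simp add: vec_eq_iff)

lemma cscale_one [simp]: "1 *\<^sub>M A = A"
  by (simp add: vec_eq_iff)

lemma cscale_zero [simp]: "c *\<^sub>M 0 = 0"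
  by (simp add: vec_eq_iff)

lemma scaleR_as_cscale: "r *\<^sub>R A = complex_of_real r *\<^sub>M A"
  by (auto simp: vec_eq_iff) (simp add: scaleR_conv_of_real)

lemma mat_mult_add_right: "(B + C) ** A = B ** A + C ** A"
  by (simp add: vec_eq_iff mat_mult_nth distrib_right sum.distrib)

lemma mat_mult_diff_right: "(B - C) ** (A::'n::finite cmat) = B ** A - C ** A"
  by (simp add: vec_eq_iff mat_mult_nth left_diff_distrib sum_subtractf)

lemma mat_mult_diff_left: "(A::'n::finite cmat) ** (B - C) = A ** B - A ** C"
  by (simp add: vec_eq_iff mat_mult_nth right_diff_distrib sum_subtractf)

lemma adjoint_adjoint [simp]: "adjoint_mat (adjoint_mat A) = A"
  by (simp add: vec_eq_iff)

lemma adjoint_add [simp]: "adjoint_mat (A + B) = adjoint_mat A + adjoint_mat B"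
  by (simp add: vec_eq_iff)

lemma adjoint_diff [simp]: "adjoint_mat (A - B) = adjoint_mat A - adjoint_mat B"
  by (simp add: vec_eq_iff)

lemma adjoint_cscale [simp]: "adjoint_mat (c *\<^sub>M A) = cnj c *\<^sub>M adjoint_mat A"
  by (simp add: vec_eq_iff)

lemma adjoint_mult [simp]: "adjoint_mat (A ** B) = adjoint_mat B ** adjoint_mat A"
  by (simp add: vec_eq_iff mat_mult_nth mult.commute)

lemma adjoint_mat_unit: "adjoint_mat (mat_unit a b :: 'n::finite cmat) = mat_unit b a"
  by (auto simp: vec_eq_iff mat_unit_nth)

lemma hermitian_add: "hermitian A \<Longrightarrow> hermitian B \<Longrightarrow> hermitian (A + B)"
  by (simp add: hermitian_def)

lemma hermitian_diff: "hermitian A \<Longrightarrow> hermitian B \<Longrightarrow> hermitian (A - B)"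
  by (simp add: hermitian_def)

lemma hermitian_scaleR: "hermitian A \<Longrightarrow> hermitian (r *\<^sub>R A)"
  by (simp add: hermitian_def scaleR_as_cscale)

lemma hermitian_cscale_real: "hermitian A \<Longrightarrow> cnj c = c \<Longrightarrow> hermitian (c *\<^sub>M A)"
  by (simp add: hermitian_def)

lemma hermitian_entry:
  assumes "hermitian A"
  shows "A $ j $ i = cnj (A $ i $ j)"
proof -
  have "adjoint_mat A $ j $ i = A $ j $ i"
    using assms by (simp add: hermitian_def)
  then show ?thesis
    by simp
qed

lemma hermitian_mat1: "hermitian (mat 1 :: 'n::finite cmat)"
  by (simp add: hermitian_def vec_eq_iff mat_def)

lemma mtrace_hermitian_real:
  assumes "hermitian A" "hermitian B"
  shows "cnj (mtrace (A ** B)) = mtrace (A ** B)"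
proof -
  have "cnj (mtrace (A ** B)) = mtrace (adjoint_mat (A ** B))"
    by (rule mtrace_adjoint[symmetric])
  also have "\<dots> = mtrace (B ** A)"
    using assms by (simp add: hermitian_def)
  also have "\<dots> = mtrace (A ** B)"
    by (rule mtrace_comm)
  finally show ?thesis .
qed

definition qform :: "'n::finite cmat \<Rightarrow> complex^'n \<Rightarrow> real" where
  "qform \<rho> x = Re (\<Sum>i\<in>UNIV. cnj (x $ i) * (\<rho> *v x) $ i)"

lemma qform_zero [simp]: "qform \<rho> 0 = 0"
  by (simp add: qform_def)

lemma pos_def_qform_pos: "pos_def \<rho> \<Longrightarrow> x \<noteq> 0 \<Longrightarrow> 0 < qform \<rho> x"
  by (auto simp: pos_def_def qform_def)

lemma pos_def_qform_nonneg: "pos_def \<rho> \<Longrightarrow> 0 \<le> qform \<rho> x"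
  by (cases "x = 0") (auto intro: less_imp_le pos_def_qform_pos)

lemma mtrace_sandwich:
  "Re (mtrace (adjoint_mat N ** \<rho> ** N)) = (\<Sum>j\<in>UNIV. qform \<rho> (column j N))"
proof -
  have "(adjoint_mat N ** \<rho> ** N) $ j $ j =
      (\<Sum>i\<in>UNIV. cnj (column j N $ i) * (\<rho> *v column j N) $ i)" for j
    by (simp add: mat_mult_nth column_def matrix_vector_mult_def sum_distrib_left
        sum_distrib_right mult.assoc) (rule sum.swap)
  then show ?thesis
    by (simp add: mtrace_def qform_def)
qed

lemma pos_def_sandwich_nonneg: "pos_def \<rho> \<Longrightarrow> 0 \<le> Re (mtrace (adjoint_mat N ** \<rho> ** N))"
  unfolding mtrace_sandwich by (intro sum_nonneg pos_def_qform_nonneg)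

lemma pos_def_sandwich_zero:
  assumes "pos_def \<rho>" "Re (mtrace (adjoint_mat N ** \<rho> ** N)) = 0"
  shows "N = 0"
proof -
  have "qform \<rho> (column j N) = 0" for j
    using assms(2) unfolding mtrace_sandwich
    by (simp add: sum_nonneg_eq_0_iff pos_def_qform_nonneg[OF assms(1)])
  then have "column j N = 0" for j
    using pos_def_qform_pos[OF assms(1)] by (metis less_irrefl)
  then show ?thesis
    by (simp add: vec_eq_iff column_def)
qed

section \<open>The Lyapunov operator, the SLD and the SLD Fisher metric\<close>

definition lyap :: "'n::finite cmat \<Rightarrow> 'n cmat \<Rightarrow> 'n cmat" where
  "lyap \<rho> L = (1/2) *\<^sub>M (\<rho> ** L + L ** \<rho>)"

lemma lyap_linear: "linear (lyap \<rho>)"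
proof (rule linearI)
  show "lyap \<rho> (A + B) = lyap \<rho> A + lyap \<rho> B" for A B
    by (simp add: lyap_def matrix_add_ldistrib mat_mult_add_right cscale_add algebra_simps)
  show "lyap \<rho> (r *\<^sub>R A) = r *\<^sub>R lyap \<rho> A" for r A
    by (simp add: lyap_def scaleR_as_cscale cscale_add mult.commute)
qed

text \<open>\<open>tr(L* lyap \<rho> L)\<close> is a sum of two sandwiches, so for positive definite \<open>\<rho>\<close>
  the operator \<open>lyap \<rho>\<close> has trivial kernel.\<close>
lemma lyap_kernel:
  assumes "pos_def \<rho>" "lyap \<rho> L = 0"
  shows "L = 0"
proof -
  have "\<rho> ** L + L ** \<rho> = 2 *\<^sub>M lyap \<rho> L"
    by (simp add: lyap_def)
  then have "mtrace (adjoint_mat L ** (\<rho> ** L + L ** \<rho>)) = 0"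
    using assms(2) by (simp add: mtrace_def)
  then have "mtrace (adjoint_mat L ** \<rho> ** L)
      + mtrace (adjoint_mat (adjoint_mat L) ** \<rho> ** adjoint_mat L) = 0"
    by (simp add: matrix_add_ldistrib matrix_mul_assoc mtrace_comm[of "adjoint_mat L ** L" \<rho>]
        mtrace_comm[of "adjoint_mat L" "L ** \<rho>"] mtrace_comm[of "\<rho> ** adjoint_mat L" L])
  then have "Re (mtrace (adjoint_mat L ** \<rho> ** L))
      + Re (mtrace (adjoint_mat (adjoint_mat L) ** \<rho> ** adjoint_mat L)) = 0"
    by (metis plus_complex.sel(1) zero_complex.sel(1))
  then have "Re (mtrace (adjoint_mat L ** \<rho> ** L)) = 0"
    using pos_def_sandwich_nonneg[OF assms(1), of L]
      pos_def_sandwich_nonneg[OF assms(1), of "adjoint_mat L"] by linarith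
  then show ?thesis
    by (rule pos_def_sandwich_zero[OF assms(1)])
qed

text \<open>An injective linear endomorphism of a finite-dimensional space is bijective.\<close>
lemma lyap_bij:
  assumes "pos_def \<rho>"
  shows "\<exists>!L. lyap \<rho> L = X"
proof -
  have inj: "inj (lyap \<rho>)"
    using lyap_linear linear_injective_0 lyap_kernel[OF assms] by blast
  then have "surj (lyap \<rho>)"
    by (rule linear_injective_imp_surjective[OF lyap_linear]) simp
  then obtain L where "lyap \<rho> L = X"
    by (metis surjD)
  with inj show ?thesis
    by (auto dest: injD)
qed

lemma lyap_SLD: "pos_def \<rho> \<Longrightarrow> lyap \<rho> (SLD \<rho> X) = X"
  unfolding SLD_def using theI'[OF lyap_bij] by (simp add: lyap_def)

lemma SLD_eqI: "pos_def \<rho> \<Longrightarrow> lyap \<rho> L = X \<Longrightarrow> SLD \<rho> X = L"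
  unfolding SLD_def using the1_equality[OF lyap_bij] by (simp add: lyap_def)

lemma lyap_adjoint: "hermitian \<rho> \<Longrightarrow> adjoint_mat (lyap \<rho> L) = lyap \<rho> (adjoint_mat L)"
  by (simp add: lyap_def hermitian_def add.commute)

lemma hermitian_lyap: "hermitian \<rho> \<Longrightarrow> hermitian L \<Longrightarrow> hermitian (lyap \<rho> L)"
  by (simp add: hermitian_def lyap_adjoint)

text \<open>The SLD of a Hermitian matrix is Hermitian: its adjoint solves the same equation.\<close>
lemma hermitian_SLD:
  assumes "pos_def \<rho>" "hermitian X"
  shows "hermitian (SLD \<rho> X)"
proof -
  have "lyap \<rho> (adjoint_mat (SLD \<rho> X)) = X"
    using assms lyap_SLD[OF assms(1)] lyap_adjoint[of \<rho> "SLD \<rho> X"]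
    by (simp add: pos_def_def hermitian_def)
  then have "SLD \<rho> X = adjoint_mat (SLD \<rho> X)"
    by (rule SLD_eqI[OF assms(1)])
  then show ?thesis
    by (simp add: hermitian_def)
qed

text \<open>By cyclicity, \<open>tr(\<rho>(PQ + QP))/2 = tr(P lyap \<rho> Q)\<close>; with \<open>Q\<close> an SLD this turns the
  Fisher metric into a trace pairing against the second argument itself.\<close>
lemma mtrace_symmetrized: "mtrace ((1/2) *\<^sub>M (\<rho> ** (P ** Q + Q ** P))) = mtrace (P ** lyap \<rho> Q)"
  unfolding lyap_def
  by (simp add: matrix_add_ldistrib matrix_mul_assoc mtrace_comm[of "\<rho> ** P" Q]
      mtrace_comm[of "\<rho> ** Q" P] mtrace_comm[of "Q ** \<rho>" P] algebra_simps)

lemma QF_as_trace: "pos_def \<rho> \<Longrightarrow> QF \<rho> G X = Re (mtrace (SLD \<rho> G ** X))"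
  unfolding QF_def using mtrace_symmetrized[of \<rho> "SLD \<rho> G" "SLD \<rho> X"] lyap_SLD[of \<rho> X]
  by simp

text \<open>\<open>tr(N lyap \<rho> N) = tr(N \<rho> N)\<close>, which is a sandwich when \<open>N\<close> is Hermitian.\<close>
lemma mtrace_mult_lyap: "mtrace (N ** lyap \<rho> N) = mtrace (N ** \<rho> ** N)"
proof -
  have "mtrace (N ** N ** \<rho>) = mtrace (N ** \<rho> ** N)"
    using mtrace_comm[of N "N ** \<rho>"] by (simp add: matrix_mul_assoc)
  then show ?thesis
    by (simp add: lyap_def matrix_add_ldistrib matrix_mul_assoc)
qed

lemma QF_nondegenerate:
  assumes "pos_def \<rho>" "G\<^sub>1 \<in> tangent" "G\<^sub>2 \<in> tangent"
    and "\<And>X. X \<in> tangent \<Longrightarrow> QF \<rho> G\<^sub>1 X = QF \<rho> G\<^sub>2 X"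
  shows "G\<^sub>1 = G\<^sub>2"
proof -
  define N where "N = SLD \<rho> G\<^sub>1 - SLD \<rho> G\<^sub>2"
  have herm_N: "hermitian N"
    using assms(2,3) unfolding N_def tangent_def
    by (auto intro: hermitian_diff hermitian_SLD[OF assms(1)])
  have lyap_N: "lyap \<rho> N = G\<^sub>1 - G\<^sub>2"
    unfolding N_def using linear_diff[OF lyap_linear] lyap_SLD[OF assms(1)] by metis
  have "G\<^sub>1 - G\<^sub>2 \<in> tangent"
    using assms(2,3) by (simp add: tangent_def hermitian_diff)
  then have "Re (mtrace (N ** (G\<^sub>1 - G\<^sub>2))) = 0"
    using assms(4) by (simp add: N_def mat_mult_diff_right QF_as_trace[OF assms(1)])
  then have "Re (mtrace (adjoint_mat N ** \<rho> ** N)) = 0"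
    using herm_N mtrace_mult_lyap[of N \<rho>] lyap_N by (simp add: hermitian_def)
  then have "N = 0"
    by (rule pos_def_sandwich_zero[OF assms(1)])
  then show ?thesis
    using lyap_N by (simp add: lyap_def)
qed

section \<open>Regular density matrices are open along tangent lines\<close>

lemma vec_scaleR_nth: "(r *\<^sub>R (x::complex^'n::finite)) $ i = complex_of_real r * x $ i"
  unfolding vector_scaleR_component by (rule scaleR_conv_of_real)

lemma mat_scaleR_nth: "(r *\<^sub>R (A::'n::finite cmat)) $ i $ j = complex_of_real r * A $ i $ j"
  unfolding vector_scaleR_component by (rule scaleR_conv_of_real)

lemma qform_scaleR: "qform \<rho> (r *\<^sub>R x) = r\<^sup>2 * qform \<rho> x"
proof -
  have "(\<Sum>i\<in>UNIV. cnj ((r *\<^sub>R x) $ i) * (\<rho> *v (r *\<^sub>R x)) $ i)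
      = complex_of_real (r\<^sup>2) * (\<Sum>i\<in>UNIV. cnj (x $ i) * (\<rho> *v x) $ i)"
    by (simp add: matrix_vector_mult_def vec_scaleR_nth sum_distrib_left power2_eq_square
        algebra_simps del: vector_scaleR_component)
  then show ?thesis
    by (simp add: qform_def)
qed

lemma qform_add_scaleR: "qform (A + r *\<^sub>R B) x = qform A x + r * qform B x"
proof -
  have entry: "(A + r *\<^sub>R B) $ i $ j = A $ i $ j + complex_of_real r * B $ i $ j" for i j
    unfolding vector_add_component vector_scaleR_component by (simp only: scaleR_conv_of_real)
  have "(\<Sum>i\<in>UNIV. cnj (x $ i) * ((A + r *\<^sub>R B) *v x) $ i)
      = (\<Sum>i\<in>UNIV. cnj (x $ i) * (A *v x) $ i)
        + complex_of_real r * (\<Sum>i\<in>UNIV. cnj (x $ i) * (B *v x) $ i)"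
    by (simp add: matrix_vector_mult_def entry sum_distrib_left sum.distrib
        algebra_simps del: vector_scaleR_component vector_add_component)
  then show ?thesis
    by (simp add: qform_def)
qed

lemma continuous_on_qform: "continuous_on UNIV (qform \<rho>)"
proof -
  have "continuous_on UNIV (\<lambda>x::complex^'n. x $ i)" for i
    by (intro linear_continuous_on bounded_linear_vec_nth)
  then show ?thesis
    unfolding qform_def matrix_vector_mult_def by (auto intro!: continuous_intros)
qed

text \<open>A positive definite form is bounded below by a positive multiple of \<open>|x|\<^sup>2\<close>
  (its minimum on the compact unit sphere).\<close>
lemma pos_def_coercive:
  fixes \<rho> :: "'n::finite cmat"
  assumes "pos_def \<rho>"
  obtains m where "m > 0" "\<And>x. m * (norm x)\<^sup>2 \<le> qform \<rho> x"
proof -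
  obtain e :: "complex^'n" where "norm e = 1"
    using vector_choose_size[of 1] by auto
  then have "sphere (0::complex^'n) 1 \<noteq> {}"
    by (auto simp: sphere_def)
  then obtain x\<^sub>0 where x\<^sub>0: "x\<^sub>0 \<in> sphere 0 1" "\<And>y. y \<in> sphere 0 1 \<Longrightarrow> qform \<rho> x\<^sub>0 \<le> qform \<rho> y"
    using continuous_attains_inf[OF compact_sphere _ continuous_on_subset[OF continuous_on_qform]]
    by blast
  have "x\<^sub>0 \<noteq> 0"
    using x\<^sub>0(1) by auto
  then have pos: "0 < qform \<rho> x\<^sub>0"
    by (rule pos_def_qform_pos[OF assms])
  have "qform \<rho> x\<^sub>0 * (norm x)\<^sup>2 \<le> qform \<rho> x" for x
  proof (cases "x = 0")
    case False
    then have "(1 / norm x) *\<^sub>R x \<in> sphere 0 1"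
      by (simp add: sphere_def)
    then have "qform \<rho> x\<^sub>0 \<le> qform \<rho> ((1 / norm x) *\<^sub>R x)"
      by (rule x\<^sub>0(2))
    also have "\<dots> = qform \<rho> x / (norm x)\<^sup>2"
      by (simp add: qform_scaleR power_divide)
    finally show ?thesis
      using False by (simp add: field_simps)
  qed simp
  with pos show ?thesis
    using that by blast
qed

lemma qform_bound: "\<bar>qform X x\<bar> \<le> (\<Sum>i\<in>UNIV. \<Sum>j\<in>UNIV. norm (X $ i $ j)) * (norm x)\<^sup>2"
proof -
  have "\<bar>qform X x\<bar> \<le> norm (\<Sum>i\<in>UNIV. \<Sum>j\<in>UNIV. cnj (x $ i) * (X $ i $ j * x $ j))"
    unfolding qform_def matrix_vector_mult_def vec_lambda_beta sum_distrib_left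
    by (rule abs_Re_le_cmod)
  also have "\<dots> \<le> (\<Sum>i\<in>UNIV. \<Sum>j\<in>UNIV. norm (cnj (x $ i) * (X $ i $ j * x $ j)))"
    by (rule order_trans[OF norm_sum sum_mono]) (rule norm_sum)
  also have "\<dots> \<le> (\<Sum>i\<in>UNIV. \<Sum>j\<in>UNIV. norm (X $ i $ j) * (norm x)\<^sup>2)"
  proof (intro sum_mono)
    fix i j
    have "norm (cnj (x $ i) * (X $ i $ j * x $ j)) = norm (X $ i $ j) * (norm (x $ i) * norm (x $ j))"
      by (simp add: norm_mult)
    also have "\<dots> \<le> norm (X $ i $ j) * (norm x * norm x)"
      by (intro mult_left_mono mult_mono Finite_Cartesian_Product.norm_nth_le) auto
    finally show "norm (cnj (x $ i) * (X $ i $ j * x $ j)) \<le> norm (X $ i $ j) * (norm x)\<^sup>2"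
      by (simp add: power2_eq_square)
  qed
  also have "\<dots> = (\<Sum>i\<in>UNIV. \<Sum>j\<in>UNIV. norm (X $ i $ j)) * (norm x)\<^sup>2"
    by (simp add: sum_distrib_right)
  finally show ?thesis .
qed

lemma pos_def_perturb:
  assumes "pos_def \<rho>" "hermitian X"
  obtains d where "d > 0" "\<And>t. \<bar>t\<bar> < d \<Longrightarrow> pos_def (\<rho> + t *\<^sub>R X)"
proof -
  obtain m where m: "m > 0" "\<And>x. m * (norm x)\<^sup>2 \<le> qform \<rho> x"
    using pos_def_coercive[OF assms(1)] by blast
  define K where "K = (\<Sum>i\<in>UNIV. \<Sum>j\<in>UNIV. norm (X $ i $ j)) + 1"
  have "0 \<le> (\<Sum>i\<in>UNIV. \<Sum>j\<in>UNIV. norm (X $ i $ j))"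
    by (intro sum_nonneg norm_ge_zero)
  then have K: "K > 0"
    unfolding K_def by linarith
  have "pos_def (\<rho> + t *\<^sub>R X)" if t: "\<bar>t\<bar> < m / K" for t
  proof -
    have "0 < qform (\<rho> + t *\<^sub>R X) x" if "x \<noteq> 0" for x
    proof -
      have n: "0 < (norm x)\<^sup>2"
        using that by simp
      have "(\<Sum>i\<in>UNIV. \<Sum>j\<in>UNIV. norm (X $ i $ j)) * (norm x)\<^sup>2 \<le> K * (norm x)\<^sup>2"
        unfolding K_def using n by (intro mult_right_mono) auto
      then have "\<bar>qform X x\<bar> \<le> K * (norm x)\<^sup>2"
        using qform_bound[of X x] by linarith
      then have "\<bar>t * qform X x\<bar> \<le> \<bar>t\<bar> * (K * (norm x)\<^sup>2)"
        by (simp add: abs_mult mult_left_mono)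
      also have "\<dots> < (m / K) * (K * (norm x)\<^sup>2)"
        using t K n by (intro mult_strict_right_mono) auto
      also have "\<dots> = m * (norm x)\<^sup>2"
        using K by simp
      finally show ?thesis
        using m(2)[of x] by (simp add: qform_add_scaleR)
    qed
    moreover have "hermitian (\<rho> + t *\<^sub>R X)"
      using assms by (auto simp: pos_def_def intro: hermitian_add hermitian_scaleR)
    ultimately show ?thesis
      unfolding pos_def_def qform_def by blast
  qed
  then show ?thesis
    using that m K by (metis divide_pos_pos)
qed

lemma line_eventually_in_Pdot:
  assumes "\<rho> \<in> Pdot" "X \<in> tangent"
  shows "\<forall>\<^sub>F t in nhds 0. \<rho> + t *\<^sub>R X \<in> Pdot"
proof -
  have "pos_def \<rho>" "mtrace \<rho> = 1" "hermitian X" "mtrace X = 0"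
    using assms by (auto simp: Pdot_def tangent_def)
  moreover obtain d where "d > 0" "\<And>t. \<bar>t\<bar> < d \<Longrightarrow> pos_def (\<rho> + t *\<^sub>R X)"
    using pos_def_perturb \<open>pos_def \<rho>\<close> \<open>hermitian X\<close> by blast
  ultimately show ?thesis
    unfolding eventually_nhds_metric
    by (intro exI[of _ d]) (auto simp: Pdot_def dist_real_def scaleR_as_cscale)
qed

lemma has_derivative_along_curve:
  fixes F :: "'a::real_normed_vector \<Rightarrow> real" and \<gamma> :: "real \<Rightarrow> 'a"
  assumes F: "(F has_derivative F') (at (\<gamma> 0) within U)"
    and \<gamma>: "(\<gamma> has_vector_derivative X) (at 0)"
    and in_U: "\<forall>\<^sub>F t in nhds 0. \<gamma> t \<in> U"
  shows "((\<lambda>t. F (\<gamma> t)) has_real_derivative F' X) (at 0)"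
proof -
  obtain S where S: "open S" "0 \<in> S" "\<forall>t\<in>S. \<gamma> t \<in> U"
    using in_U unfolding eventually_nhds by blast
  have "(\<gamma> has_derivative (\<lambda>h. h *\<^sub>R X)) (at 0 within S)"
    using \<gamma> unfolding has_vector_derivative_def by (rule has_derivative_at_withinI)
  moreover have "(F has_derivative F') (at (\<gamma> 0) within \<gamma> ` S)"
    using has_derivative_subset[OF F] S(3) by blast
  ultimately have "((F \<circ> \<gamma>) has_derivative (F' \<circ> (\<lambda>h. h *\<^sub>R X))) (at 0 within S)"
    by (rule diff_chain_within)
  then have "((F \<circ> \<gamma>) has_derivative (F' \<circ> (\<lambda>h. h *\<^sub>R X))) (at 0)"
    using at_within_open[OF S(2,1)] by simp
  moreover have "F' \<circ> (\<lambda>h. h *\<^sub>R X) = (*) (F' X)"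
    using has_derivative_linear[OF F] by (auto simp: linear_scale)
  ultimately show ?thesis
    unfolding has_field_derivative_def comp_def by simp
qed

lemma line_has_vector_derivative: "((\<lambda>t::real. \<rho> + t *\<^sub>R E) has_vector_derivative E) (at 0)"
  by (auto intro!: derivative_eq_intros simp: has_vector_derivative_def)

lemma line_eventually_in_open_Herm:
  assumes "openin (top_of_set Herm) U" "\<rho> \<in> U" "hermitian E"
  shows "\<forall>\<^sub>F t in nhds 0. \<rho> + t *\<^sub>R E \<in> U"
proof -
  obtain T where T: "open T" "U = Herm \<inter> T"
    using assms(1) unfolding openin_open by blast
  have "((\<lambda>t::real. \<rho> + t *\<^sub>R E) \<longlongrightarrow> \<rho> + 0 *\<^sub>R E) (nhds 0)"
    by (intro tendsto_intros filterlim_ident)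
  then have "\<forall>\<^sub>F t in nhds 0. \<rho> + t *\<^sub>R E \<in> T"
    using T assms(2) by (auto intro: topological_tendstoD)
  moreover have "\<rho> + t *\<^sub>R E \<in> Herm" for t
    using assms(2,3) T(2) by (auto simp: Herm_def intro: hermitian_add hermitian_scaleR)
  ultimately show ?thesis
    using T(2) by (auto elim: eventually_mono)
qed

lemma pderiv_dir_eq_derivative:
  assumes "openin (top_of_set Herm) U" "\<rho> \<in> U" "hermitian E"
    and F: "(F has_derivative F') (at \<rho> within U)"
  shows "pderiv_dir F \<rho> E = F' E"
proof -
  have "(F has_derivative F') (at ((\<lambda>t. \<rho> + t *\<^sub>R E) 0) within U)"
    using F by simp
  then have "((\<lambda>t. F (\<rho> + t *\<^sub>R E)) has_real_derivative F' E) (at 0)"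
    by (rule has_derivative_along_curve[OF _ line_has_vector_derivative
          line_eventually_in_open_Herm[OF assms(1-3)]])
  then show ?thesis
    unfolding pderiv_dir_def by (rule DERIV_imp_deriv)
qed

text \<open>The test curves in the
  definition of \<open>is_grad\<close> can be reduced to straight lines, which do lie in \<open>Pdot\<close>.\<close>
lemma is_grad_iff:
  assumes "Pdot \<subseteq> U" "\<rho> \<in> Pdot"
    and F: "(F has_derivative F') (at \<rho> within U)"
  shows "is_grad F \<rho> G \<longleftrightarrow> G \<in> tangent \<and> (\<forall>X\<in>tangent. QF \<rho> G X = F' X)"
proof -
  have along_curve: "((\<lambda>t. F (\<gamma> t)) has_real_derivative F' X) (at 0)"
    if "\<forall>\<^sub>F t in nhds 0. \<gamma> t \<in> Pdot" "\<gamma> 0 = \<rho>" "(\<gamma> has_vector_derivative X) (at 0)"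
    for \<gamma> X
  proof -
    have "(F has_derivative F') (at (\<gamma> 0) within U)"
      using F that(2) by simp
    moreover have "\<forall>\<^sub>F t in nhds 0. \<gamma> t \<in> U"
      using that(1) assms(1) by (auto elim: eventually_mono)
    ultimately show ?thesis
      using has_derivative_along_curve that(3) by blast
  qed
  have along_line: "((\<lambda>t. F (\<rho> + t *\<^sub>R X)) has_real_derivative F' X) (at 0)" if "X \<in> tangent" for X
    using along_curve[OF line_eventually_in_Pdot[OF assms(2) that] _ line_has_vector_derivative]
    by simp
  show ?thesis
  proof
    assume grad: "is_grad F \<rho> G"
    have "QF \<rho> G X = F' X" if "X \<in> tangent" for X
    proof (rule DERIV_unique)
      show "((\<lambda>t. F (\<rho> + t *\<^sub>R X)) has_real_derivative QF \<rho> G X) (at 0)"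
        using grad that line_eventually_in_Pdot[OF assms(2) that] line_has_vector_derivative[of \<rho> X]
        unfolding is_grad_def by simp
    qed (rule along_line[OF that])
    with grad show "G \<in> tangent \<and> (\<forall>X\<in>tangent. QF \<rho> G X = F' X)"
      by (simp add: is_grad_def)
  next
    assume "G \<in> tangent \<and> (\<forall>X\<in>tangent. QF \<rho> G X = F' X)"
    then show "is_grad F \<rho> G"
      unfolding is_grad_def using along_curve by auto
  qed
qed

section \<open>Coordinates on Hermitian matrices\<close>

definition xdir :: "'n::finite \<Rightarrow> 'n \<Rightarrow> 'n cmat" where
  "xdir a b = mat_unit a b + mat_unit b a"

definition ydir :: "'n::finite \<Rightarrow> 'n \<Rightarrow> 'n cmat" where
  "ydir a b = \<i> *\<^sub>M mat_unit a b - \<i> *\<^sub>M mat_unit b a"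

lemma hermitian_xdir: "hermitian (xdir a b)"
  by (simp add: hermitian_def xdir_def adjoint_mat_unit add.commute)

lemma hermitian_ydir: "hermitian (ydir a b)"
  by (simp add: hermitian_def ydir_def adjoint_mat_unit vec_eq_iff)

lemma hermitian_mat_unit_diag: "hermitian (mat_unit a a)"
  by (simp add: hermitian_def adjoint_mat_unit)

definition coord_part :: "'n::{finite,linorder} cmat \<Rightarrow> 'n \<Rightarrow> 'n \<Rightarrow> 'n cmat" where
  "coord_part X a b =
     (if a < b then Re (X $ a $ b) *\<^sub>R xdir a b + Im (X $ a $ b) *\<^sub>R ydir a b
      else if a = b then Re (X $ a $ a) *\<^sub>R mat_unit a a else 0)"

lemma coord_part_nth:
  "coord_part X a b $ i $ j =
     (if i = a \<and> j = b then (if a < b then X $ a $ b else if a = b then of_real (Re (X $ a $ a)) else 0)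
      else 0)
   + (if i = b \<and> j = a \<and> a < b then cnj (X $ a $ b) else 0)"
proof -
  consider "a < b" | "a = b" | "b < a"
    using less_linear by blast
  then show ?thesis
  proof cases
    case 1
    then have "a \<noteq> b" by simp
    with 1 show ?thesis
      by (simp add: coord_part_def xdir_def ydir_def mat_unit_nth mat_scaleR_nth
          del: vector_scaleR_component) (simp add: complex_eq_iff)
  next
    case 2
    then show ?thesis
      by (simp add: coord_part_def mat_unit_nth mat_scaleR_nth del: vector_scaleR_component)
  next
    case 3
    then have "\<not> a < b" "a \<noteq> b"
      by auto
    then show ?thesis
      by (simp add: coord_part_def)
  qed
qed

lemma sum_sum_delta:
  fixes f :: "'a::finite \<Rightarrow> 'a \<Rightarrow> 'b::comm_monoid_add"
  shows "(\<Sum>a\<in>UNIV. \<Sum>b\<in>UNIV. if i = a \<and> j = b then f a b else 0) = f i j"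
proof -
  have "(\<Sum>b\<in>UNIV. if i = a \<and> j = b then f a b else 0) = (if i = a then f a j else 0)" for a
    by (cases "i = a") simp_all
  then show ?thesis
    by simp
qed

lemma sum_delta_conj:
  fixes g :: "'a::finite \<Rightarrow> 'b::comm_monoid_add"
  shows "(\<Sum>b\<in>UNIV. if i = b \<and> Q b then g b else 0) = (if Q i then g i else 0)"
proof -
  have "(if i = b \<and> Q b then g b else 0) = (if b = i then (if Q i then g i else 0) else 0)" for b
    by auto
  then show ?thesis
    by simp
qed

lemma sum_sum_delta_transposed:
  fixes f :: "'a::finite \<Rightarrow> 'a \<Rightarrow> 'b::comm_monoid_add"
  shows "(\<Sum>a\<in>UNIV. \<Sum>b\<in>UNIV. if i = b \<and> j = a \<and> P a b then f a b else 0)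
    = (if P j i then f j i else 0)"
  by (simp only: sum_delta_conj)

lemma sum_coord_part_nth:
  "(\<Sum>a\<in>UNIV. \<Sum>b\<in>UNIV. coord_part X a b) $ i $ j =
     (if i < j then X $ i $ j else if i = j then of_real (Re (X $ i $ i)) else 0)
   + (if j < i then cnj (X $ j $ i) else 0)"
  by (simp only: sum_component coord_part_nth sum.distrib sum_sum_delta sum_sum_delta_transposed)

lemma hermitian_coord_decomp:
  assumes "hermitian X"
  shows "(\<Sum>a\<in>UNIV. \<Sum>b\<in>UNIV. coord_part X a b) = X"
proof -
  have "(\<Sum>a\<in>UNIV. \<Sum>b\<in>UNIV. coord_part X a b) $ i $ j = X $ i $ j" for i j
  proof -
    consider "i < j" | "i = j" | "j < i"
      using less_linear by blast
    then show ?thesis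
    proof cases
      case 1
      then have "\<not> j < i" by auto
      with 1 show ?thesis
        by (simp only: sum_coord_part_nth if_True if_False add_0_right)
    next
      case 2
      have "X $ i $ i = cnj (X $ i $ i)"
        by (rule hermitian_entry[OF assms])
      then have "of_real (Re (X $ i $ i)) = X $ i $ i"
        by (simp add: complex_eq_iff)
      with 2 show ?thesis
        by (simp only: sum_coord_part_nth less_irrefl if_False add_0_right) simp
    next
      case 3
      then have "\<not> i < j" "i \<noteq> j" by auto
      with 3 show ?thesis
        by (simp only: sum_coord_part_nth if_True if_False add_0_left hermitian_entry[OF assms, of j i] complex_cnj_cnj)
    qed
  qed
  then show ?thesis
    by (simp add: vec_eq_iff)
qed

lemma linear_eq_on_hermitian:
  fixes f g :: "'n::{finite,linorder} cmat \<Rightarrow> 'b::real_vector"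
  assumes lin: "linear f" "linear g"
    and x: "\<And>a b. a < b \<Longrightarrow> f (xdir a b) = g (xdir a b)"
    and y: "\<And>a b. a < b \<Longrightarrow> f (ydir a b) = g (ydir a b)"
    and z: "\<And>a. f (mat_unit a a) = g (mat_unit a a)"
    and X: "hermitian X"
  shows "f X = g X"
proof -
  have part: "f (coord_part X a b) = g (coord_part X a b)" for a b
  proof -
    consider "a < b" | "a = b" | "\<not> a < b" "a \<noteq> b"
      by blast
    then show ?thesis
    proof cases
      case 1
      then show ?thesis
        by (simp add: coord_part_def linear_add[OF lin(1)] linear_add[OF lin(2)]
            linear_scale[OF lin(1)] linear_scale[OF lin(2)] x y)
    next
      case 2
      then show ?thesis
        by (simp add: coord_part_def linear_scale[OF lin(1)] linear_scale[OF lin(2)] z)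
    next
      case 3
      then show ?thesis
        by (simp add: coord_part_def linear_0[OF lin(1)] linear_0[OF lin(2)])
    qed
  qed
  have "f X = f (\<Sum>a\<in>UNIV. \<Sum>b\<in>UNIV. coord_part X a b)"
    by (simp only: hermitian_coord_decomp[OF X])
  also have "\<dots> = (\<Sum>a\<in>UNIV. \<Sum>b\<in>UNIV. g (coord_part X a b))"
    by (simp only: linear_sum[OF lin(1)] part)
  also have "\<dots> = g (\<Sum>a\<in>UNIV. \<Sum>b\<in>UNIV. coord_part X a b)"
    by (simp only: linear_sum[OF lin(2)])
  also have "\<dots> = g X"
    by (simp only: hermitian_coord_decomp[OF X])
  finally show ?thesis .
qed

section \<open>The matrix \<open>\<M>(F)\<close> represents the derivative\<close>

lemma hermitian_MF: "hermitian (MF F \<rho>)"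
  unfolding hermitian_def by (auto simp: vec_eq_iff MF_def not_less_iff_gr_or_eq)

lemma linear_trace_pairing: "linear (\<lambda>X. Re (mtrace ((M :: 'n::finite cmat) ** X)))"
proof (rule linearI)
  show "Re (mtrace (M ** (A + B))) = Re (mtrace (M ** A)) + Re (mtrace (M ** B))" for A B
    by (simp add: matrix_add_ldistrib)
  show "Re (mtrace (M ** (r *\<^sub>R A))) = r *\<^sub>R Re (mtrace (M ** A))" for r A
    by (simp add: scaleR_as_cscale)
qed

text \<open>Pairing \<open>\<M>(F)\<close> with a coordinate direction returns the corresponding partial
  derivative: this is what the Wirtinger-type entries of \<open>\<M>(F)\<close> are designed for.\<close>
lemma MF_pairing_xdir: "a < b \<Longrightarrow> Re (mtrace (MF F \<rho> ** xdir a b)) = dx F \<rho> a b"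
  by (auto simp: xdir_def matrix_add_ldistrib mtrace_mult_mat_unit MF_def)

lemma MF_pairing_ydir: "a < b \<Longrightarrow> Re (mtrace (MF F \<rho> ** ydir a b)) = dy F \<rho> a b"
  by (auto simp: ydir_def mat_mult_diff_left mtrace_mult_mat_unit MF_def field_simps)

lemma MF_pairing_diag: "Re (mtrace (MF F \<rho> ** mat_unit a a)) = dz F \<rho> a"
  by (simp add: mtrace_mult_mat_unit MF_def)

lemma MF_represents_derivative:
  assumes lin: "linear F'"
    and dir: "\<And>E. hermitian E \<Longrightarrow> pderiv_dir F \<rho> E = F' E"
    and X: "hermitian X"
  shows "F' X = Re (mtrace (MF F \<rho> ** X))"
proof (rule linear_eq_on_hermitian[OF lin linear_trace_pairing _ _ _ X])
  show "F' (xdir a b) = Re (mtrace (MF F \<rho> ** xdir a b))" if "a < b" for a b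
    using dir[OF hermitian_xdir] MF_pairing_xdir[OF that] by (simp add: dx_def xdir_def)
  show "F' (ydir a b) = Re (mtrace (MF F \<rho> ** ydir a b))" if "a < b" for a b
    using dir[OF hermitian_ydir] MF_pairing_ydir[OF that] by (simp add: dy_def ydir_def)
  show "F' (mat_unit a a) = Re (mtrace (MF F \<rho> ** mat_unit a a))" for a
    using dir[OF hermitian_mat_unit_diag, of a] MF_pairing_diag[of F \<rho> a] by (simp add: dz_def)
qed

text \<open>The SLD of the claimed gradient: \<open>M\<close> shifted by a multiple of the identity so that the
  result of \<open>lyap \<rho>\<close> has trace zero.\<close>
definition grad_SLD :: "'n::finite cmat \<Rightarrow> 'n cmat \<Rightarrow> 'n cmat" where
  "grad_SLD \<rho> M = M - mtrace (\<rho> ** M) *\<^sub>M mat 1"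

lemma lyap_grad_SLD:
  "lyap \<rho> (grad_SLD \<rho> M) = (1/2) *\<^sub>M (\<rho> ** M + M ** \<rho>) - mtrace (\<rho> ** M) *\<^sub>M \<rho>"
  unfolding lyap_def grad_SLD_def
  by (simp add: mat_mult_diff_left mat_mult_diff_right cscale_diff cscale_add vec_eq_iff algebra_simps)

lemma gradient_formula:
  fixes \<rho> M :: "'n::finite cmat"
  assumes "\<rho> \<in> Pdot" "hermitian M"
  defines "G \<equiv> (1/2) *\<^sub>M (\<rho> ** M + M ** \<rho>) - mtrace (\<rho> ** M) *\<^sub>M \<rho>"
  shows "G \<in> tangent" and "\<And>X. X \<in> tangent \<Longrightarrow> QF \<rho> G X = Re (mtrace (M ** X))"
proof -
  have pd: "pos_def \<rho>" "hermitian \<rho>" "mtrace \<rho> = 1"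
    using assms(1) by (auto simp: Pdot_def pos_def_def)
  have lyap_G: "lyap \<rho> (grad_SLD \<rho> M) = G"
    unfolding G_def by (rule lyap_grad_SLD)
  have "hermitian (grad_SLD \<rho> M)"
    unfolding grad_SLD_def
    by (intro hermitian_diff hermitian_cscale_real hermitian_mat1 mtrace_hermitian_real pd(2) assms(2))
  then have "hermitian G"
    using lyap_G hermitian_lyap[OF pd(2)] by metis
  moreover have "mtrace G = 0"
    using pd(3) by (simp add: G_def mtrace_comm[of M \<rho>])
  ultimately show "G \<in> tangent"
    by (simp add: tangent_def)
  show "QF \<rho> G X = Re (mtrace (M ** X))" if "X \<in> tangent" for X
    using that SLD_eqI[OF pd(1) lyap_G]
    by (simp add: QF_as_trace[OF pd(1)] grad_SLD_def tangent_def mat_mult_diff_right)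
qed

theorem lemma2p2:
  fixes F :: "('n::{finite,linorder}) cmat \<Rightarrow> real"
    and U :: "'n cmat set"
    and \<rho> :: "'n cmat"
  assumes "openin (top_of_set Herm) U"
    and "Pdot \<subseteq> U"
    and "F differentiable_on U"
    and "\<rho> \<in> Pdot"
  shows "is_grad F \<rho> ((1/2) *\<^sub>M (\<rho> ** MF F \<rho> + MF F \<rho> ** \<rho>) - mtrace (\<rho> ** MF F \<rho>) *\<^sub>M \<rho>)
       \<and> (\<forall>G. is_grad F \<rho> G \<longrightarrow>
             G = (1/2) *\<^sub>M (\<rho> ** MF F \<rho> + MF F \<rho> ** \<rho>) - mtrace (\<rho> ** MF F \<rho>) *\<^sub>M \<rho>)"
    (is "is_grad F \<rho> ?G \<and> _")
proof -
  have \<rho>_U: "\<rho> \<in> U"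
    using assms(2,4) by blast
  then obtain F' where F': "(F has_derivative F') (at \<rho> within U)"
    using assms(3) unfolding differentiable_on_def differentiable_def by blast
  have dF: "F' X = Re (mtrace (MF F \<rho> ** X))" if "X \<in> tangent" for X
    using that MF_represents_derivative[OF has_derivative_linear[OF F']
        pderiv_dir_eq_derivative[OF assms(1) \<rho>_U _ F']]
    by (simp add: tangent_def)
  note G = gradient_formula[OF assms(4) hermitian_MF[of F \<rho>]]
  have grad: "is_grad F \<rho> ?G"
    using G dF by (simp add: is_grad_iff[OF assms(2,4) F'])
  moreover have "G' = ?G" if "is_grad F \<rho> G'" for G'
  proof (rule QF_nondegenerate)
    show "pos_def \<rho>"
      using assms(4) by (simp add: Pdot_def)
    show "QF \<rho> G' X = QF \<rho> ?G X" if "X \<in> tangent" for X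
      using \<open>is_grad F \<rho> G'\<close> grad that by (simp add: is_grad_iff[OF assms(2,4) F'])
  qed (use that G(1) in \<open>simp_all add: is_grad_iff[OF assms(2,4) F']\<close>)
  ultimately show ?thesis
    by blast
qed

end
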